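(* Let $C$ be a finite elementary abelian $p$-group ($p$ prime) and $k$ a positive integer; let $d=\log_p|C|$. Then there exists $t\ge k$ such that the direct product $P=\prod_{i=1}^tC_i$ of copies $C_i$ of $C$ contains a subgroup $R$, invariant under the diagonal action on $P$ of the endomorphism algebra $\mathrm{End}\,C\cong M_d(\mathbb{Z}/p\mathbb{Z})$, with the following properties: a) $R$ is contained in the union of the kernels $K_j$ of the natural projections $P\to C_j$, $j=1,\dots,t$; b) $R\cdot\prod_{j\notin J}C_j=P$ for every subset $J\subseteq\{1,\dots,t\}$ of cardinality $k$; b') moreover, every such $J$ is contained in a set $J'\supseteq J$ such that $P=R\times\prod_{j\notin J'}C_j$, and there exist integers $n_{ij}$ such that the projection $\pi:P\to\prod_{j\notin J'}C_j$ with kernel $R$ acts by $C_i\ni c_i\mapsto\prod_{j\notin J'}c_j^{n_{ij}}$, where $c_j\in C_j$ is the element corresponding to $c_i$ under the isomorphisms $C_i\cong C\cong C_j$. *)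

theory Defs
  imports "HOL-Algebra.Algebra"
begin

definition Pow_group :: "('a, 'b) monoid_scheme \<Rightarrow> nat \<Rightarrow> (nat \<Rightarrow> 'a) monoid" where
  "Pow_group C t = product_group {..<t} (\<lambda>_. C)"

definition coord_embed :: "('a, 'b) monoid_scheme \<Rightarrow> nat \<Rightarrow> nat \<Rightarrow> 'a \<Rightarrow> (nat \<Rightarrow> 'a)" where
  "coord_embed C t i c = (\<lambda>j\<in>{..<t}. if j = i then c else \<one>\<^bsub>C\<^esub>)"

definition diag_map :: "nat \<Rightarrow> ('a \<Rightarrow> 'a) \<Rightarrow> (nat \<Rightarrow> 'a) \<Rightarrow> (nat \<Rightarrow> 'a)" where
  "diag_map t \<phi> x = (\<lambda>j\<in>{..<t}. \<phi> (x j))"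

definition coord_subprod :: "('a, 'b) monoid_scheme \<Rightarrow> nat \<Rightarrow> nat set \<Rightarrow> (nat \<Rightarrow> 'a) set" where
  "coord_subprod C t S = {f \<in> carrier (Pow_group C t). \<forall>j\<in>{..<t} - S. f j = \<one>\<^bsub>C\<^esub>}"

end

(*
  Index the coordinates by the nonempty subsets S of an N-element set and let R consist of the
  vectors whose S-coordinate is the product of c U over the nonempty U <= S with |U| <= k, for
  arbitrary families c in C.  Endomorphisms of C commute with these products, so R is invariant.

  a) Choose N by Ramsey's theorem such that for every family c some p^k-element set H has c
  constant on its subsets of each size 1..k.  The H-coordinate is then a product of powers with
  exponents (p^k choose r), 1 <= r <= k, all divisible by p, hence trivial.

  b) Prescribed values at k coordinates S_1, ..., S_k are reached one coordinate at a time: if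
  S_i has maximal size, some U <= S_i with |U| <= k is contained in no other S_j, and the family
  supported on U changes the coordinate S_i but none of the other S_j.

  b') Enlarge J to a maximal J' with R * prod_{j notin J'} C_j = P.  As End C acts transitively
  on the nontrivial elements of C and preserves R, maximality forces R to meet
  prod_{j notin J'} C_j trivially.  The projection along R commutes with the diagonal action,
  so each of its coordinate maps C_i -> C_j commutes with End C and is a power map.
*)

theory Submission
  imports Defs "HOL-Library.Ramsey" "HOL-Number_Theory.Cong"
begin

section \<open>Endomorphisms of a finite elementary abelian group\<close>

locale elementary_abelian = comm_group C for C (structure) +
  fixes p :: nat
  assumes prime_p: "Factorial_Ring.prime p"
    and finite_carrier: "finite (carrier C)"
    and pow_p_eq_one: "x \<in> carrier C \<Longrightarrow> x [^] p = \<one>"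
begin

lemma p_gt_1: "p > 1"
  using prime_p prime_gt_1_nat by blast

lemma less_p_pow: "n < p ^ n"
proof -
  have "n < 2 ^ n"
    by (rule less_exp)
  also have "(2::nat) ^ n \<le> p ^ n"
    using p_gt_1 by (intro power_mono) auto
  finally show ?thesis .
qed

lemma pow_mod_p:
  assumes "x \<in> carrier C"
  shows "x [^] (i mod p) = x [^] i"
proof -
  have "x [^] i = x [^] (p * (i div p) + i mod p)"
    by simp
  also have "\<dots> = (x [^] p) [^] (i div p) \<otimes> x [^] (i mod p)"
    using assms by (simp add: nat_pow_mult nat_pow_pow)
  also have "\<dots> = x [^] (i mod p)"
    using assms pow_p_eq_one by simp
  finally show ?thesis
    by simp
qed

lemma pow_cong_p: "x \<in> carrier C \<Longrightarrow> [i = j] (mod p) \<Longrightarrow> x [^] i = x [^] j"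
  by (metis cong_def pow_mod_p)

lemma subgroup_nat_pow_closed: "subgroup H C \<Longrightarrow> x \<in> H \<Longrightarrow> x [^] (n::nat) \<in> H"
  by (metis int_pow_int subgroup_int_pow_closed)

lemma pow_exponent_invertible:
  assumes x: "x \<in> carrier C" and k: "\<not> p dvd k"
  obtains e :: nat where "(x [^] k) [^] e = x"
proof -
  have "coprime k p"
    using prime_p k by (metis prime_imp_coprime coprime_commute)
  then obtain e where "[k * e = 1] (mod p)"
    using cong_solve_coprime_nat by auto
  then have "(x [^] k) [^] e = x"
    using pow_cong_p[OF x] x by (simp add: nat_pow_pow)
  then show thesis
    using that by blast
qed

lemma pow_mem_subgroup_imp_dvd:
  assumes H: "subgroup H C" and a: "a \<in> carrier C" "a \<notin> H" and ad: "a [^] d \<in> H"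
  shows "p dvd d"
  by (metis pow_exponent_invertible[OF a(1)] subgroup_nat_pow_closed[OF H ad] a(2))

lemma pow_mult_subgroup_dvd:
  assumes H: "subgroup H C" and a: "a \<in> carrier C" "a \<notin> H" and h: "h \<in> H" "h' \<in> H"
    and le: "i \<le> j" and eq: "a [^] i \<otimes> h = a [^] j \<otimes> h'"
  shows "p dvd j - i"
proof -
  have hC: "h \<in> carrier C" "h' \<in> carrier C"
    using H h subgroup.subset by blast+
  have "a [^] i \<otimes> h = a [^] i \<otimes> (a [^] (j - i) \<otimes> h')"
    using eq le a hC by (simp add: m_assoc[symmetric] nat_pow_mult)
  then have "h = a [^] (j - i) \<otimes> h'"
    using a hC by (meson l_cancel m_closed nat_pow_closed)
  then have "a [^] (j - i) = h \<otimes> inv h'"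
    using a hC by (simp add: m_assoc)
  also have "\<dots> \<in> H"
    using H h by (simp add: subgroup.m_closed subgroup.m_inv_closed)
  finally show ?thesis
    by (rule pow_mem_subgroup_imp_dvd[OF H a])
qed

lemma pow_mult_subgroup_cong:
  assumes H: "subgroup H C" and a: "a \<in> carrier C" "a \<notin> H" and h: "h \<in> H" "h' \<in> H"
    and eq: "a [^] i \<otimes> h = a [^] j \<otimes> h'"
  shows "[i = j] (mod p)"
proof (cases "i \<le> j")
  case True
  then show ?thesis
    using pow_mult_subgroup_dvd[OF H a h True eq] by (simp add: cong_altdef_nat cong_sym)
next
  case False
  then show ?thesis
    using pow_mult_subgroup_dvd[OF H a h(2,1) _ eq[symmetric]] by (simp add: cong_altdef_nat)
qed

lemma subgroup_join_cyclic_avoids: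
  assumes H: "subgroup H C" "a \<notin> H" and a: "a \<in> carrier C" and x: "x \<in> carrier C"
    and no_rep: "\<nexists>i h. h \<in> H \<and> x = a [^] (i::nat) \<otimes> h"
  shows "a \<notin> H <#> generate C {x}"
proof
  have "ord x dvd p"
    using x pow_p_eq_one pow_eq_id by blast
  then have "ord x \<noteq> 0"
    using p_gt_1 by (cases "ord x = 0") auto
  then have gen: "generate C {x} = {x [^] (k::nat) | k. k \<in> UNIV}"
    using generate_pow_nat[OF x] by blast
  assume "a \<in> H <#> generate C {x}"
  then obtain h k where h: "h \<in> H" and a_eq: "a = h \<otimes> x [^] (k::nat)"
    unfolding gen set_mult_def by blast
  have hC: "h \<in> carrier C"
    using h H subgroup.subset by blast
  show False
  proof (cases "p dvd k")
    case True
    then have "x [^] k = \<one>"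
      using pow_cong_p[OF x, of k 0] by (simp add: cong_0_iff)
    then show False
      using a_eq h hC H(2) by simp
  next
    case False
    then obtain e :: nat where e: "(x [^] k) [^] e = x"
      using pow_exponent_invertible[OF x] by blast
    have "x [^] k = inv h \<otimes> a"
      using a_eq hC x by (simp add: m_assoc[symmetric])
    then have "x = a [^] e \<otimes> (inv h) [^] e"
      using e hC a by (simp add: nat_pow_distrib m_comm)
    moreover have "(inv h) [^] e \<in> H"
      using H h by (simp add: subgroup.m_inv_closed subgroup_nat_pow_closed)
    ultimately show False
      using no_rep by blast
  qed
qed

lemma exists_complement:
  assumes a: "a \<in> carrier C" "a \<noteq> \<one>"
  obtains H where "subgroup H C" "a \<notin> H" "\<forall>x\<in>carrier C. \<exists>i h. h \<in> H \<and> x = a [^] (i::nat) \<otimes> h"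
proof -
  define F where "F = {H. subgroup H C \<and> a \<notin> H}"
  have "F \<subseteq> Pow (carrier C)"
    unfolding F_def using subgroup.subset by blast
  then have "finite F"
    using finite_carrier by (simp add: finite_subset)
  moreover have "{\<one>} \<in> F"
    unfolding F_def using triv_subgroup a by auto
  ultimately obtain H where "H \<in> F" and maximal: "\<And>H'. H' \<in> F \<Longrightarrow> H \<subseteq> H' \<Longrightarrow> H = H'"
    using finite_has_maximal[of F] by blast
  then have H: "subgroup H C" "a \<notin> H"
    by (auto simp: F_def)
  have "\<exists>i h. h \<in> H \<and> x = a [^] (i::nat) \<otimes> h" if x: "x \<in> carrier C" for x
  proof (rule ccontr)
    assume no_rep: "\<nexists>i h. h \<in> H \<and> x = a [^] (i::nat) \<otimes> h"
    define H' where "H' = H <#> generate C {x}"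
    have "H' \<in> F"
      unfolding F_def H'_def using H x subgroup_join_cyclic_avoids[OF H a(1) x no_rep]
      by (auto intro: mult_subgroups generate_is_subgroup)
    moreover have "h \<in> H'" if "h \<in> H" for h
    proof -
      have "h = h \<otimes> \<one>"
        using that H(1) subgroup.subset by fastforce
      then show ?thesis
        unfolding H'_def set_mult_def using that generate.one by blast
    qed
    moreover have "x \<in> H'"
    proof -
      have "x = \<one> \<otimes> x"
        using x by simp
      then show ?thesis
        unfolding H'_def set_mult_def using subgroup.one_closed[OF H(1)] generate.incl[of x "{x}"] by blast
    qed
    moreover have "x \<notin> H"
      using no_rep x by (metis l_one nat_pow_0)
    ultimately show False
      using maximal by blast
  qed
  with H that show thesis
    by blast
qed

lemma exists_coefficient_functional:
  assumes a: "a \<in> carrier C" "a \<noteq> \<one>"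
  obtains f :: "'a \<Rightarrow> nat"
  where "\<And>x y. x \<in> carrier C \<Longrightarrow> y \<in> carrier C \<Longrightarrow> [f (x \<otimes> y) = f x + f y] (mod p)"
    and "[f a = 1] (mod p)"
proof -
  obtain H where H: "subgroup H C" "a \<notin> H"
    and rep: "\<forall>x\<in>carrier C. \<exists>i h. h \<in> H \<and> x = a [^] (i::nat) \<otimes> h"
    using exists_complement[OF a] by blast
  define f where "f x = (SOME i. \<exists>h. h \<in> H \<and> x = a [^] (i::nat) \<otimes> h)" for x
  have f: "\<exists>h. h \<in> H \<and> x = a [^] f x \<otimes> h" if "x \<in> carrier C" for x
    unfolding f_def using rep that by (intro someI_ex[where P = "\<lambda>i. \<exists>h. h \<in> H \<and> x = a [^] i \<otimes> h"]) blast
  have HC: "H \<subseteq> carrier C"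
    using H subgroup.subset by blast
  have additive: "[f (x \<otimes> y) = f x + f y] (mod p)" if x: "x \<in> carrier C" and y: "y \<in> carrier C" for x y
  proof -
    obtain h where h: "h \<in> H" "x = a [^] f x \<otimes> h"
      using f[OF x] by blast
    obtain h' where h': "h' \<in> H" "y = a [^] f y \<otimes> h'"
      using f[OF y] by blast
    obtain h'' where h'': "h'' \<in> H" "x \<otimes> y = a [^] f (x \<otimes> y) \<otimes> h''"
      using f[OF m_closed[OF x y]] by blast
    have "h \<in> carrier C" "h' \<in> carrier C"
      using h(1) h'(1) HC by auto
    then have "(a [^] f x \<otimes> h) \<otimes> (a [^] f y \<otimes> h') = a [^] (f x + f y) \<otimes> (h \<otimes> h')"
      using a(1) by (simp add: nat_pow_mult m_ac)
    then have "a [^] f (x \<otimes> y) \<otimes> h'' = a [^] (f x + f y) \<otimes> (h \<otimes> h')"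
      using h(2) h'(2) h''(2) by simp
    moreover have "h \<otimes> h' \<in> H"
      using H h(1) h'(1) by (simp add: subgroup.m_closed)
    ultimately show ?thesis
      using pow_mult_subgroup_cong[OF H(1) a(1) H(2) h''(1)] by blast
  qed
  obtain h where h: "h \<in> H" "a = a [^] f a \<otimes> h"
    using f[OF a(1)] by blast
  then have "a [^] f a \<otimes> h = a [^] (1::nat) \<otimes> \<one>"
    using a by simp
  then have "[f a = 1] (mod p)"
    using pow_mult_subgroup_cong[OF H(1) a(1) H(2) h(1)] subgroup.one_closed[OF H(1)] by blast
  with additive show thesis
    by (rule that)
qed

lemma exists_rank_one_endomorphisms:
  assumes a: "a \<in> carrier C" "a \<noteq> \<one>"
  obtains f :: "'a \<Rightarrow> nat"
  where "\<And>c. c \<in> carrier C \<Longrightarrow> (\<lambda>x. c [^] f x) \<in> hom C C"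
    and "\<And>c. c \<in> carrier C \<Longrightarrow> c [^] f a = c"
proof -
  obtain f :: "'a \<Rightarrow> nat"
    where additive: "\<And>x y. x \<in> carrier C \<Longrightarrow> y \<in> carrier C \<Longrightarrow> [f (x \<otimes> y) = f x + f y] (mod p)"
    and fa: "[f a = 1] (mod p)"
    using exists_coefficient_functional[OF a] by blast
  show thesis
  proof
    fix c assume c: "c \<in> carrier C"
    show "(\<lambda>x. c [^] f x) \<in> hom C C"
    proof (rule homI)
      fix x y assume "x \<in> carrier C" "y \<in> carrier C"
      then show "c [^] f (x \<otimes> y) = c [^] f x \<otimes> c [^] f y"
        using pow_cong_p[OF c additive] c by (simp add: nat_pow_mult)
    qed (use c in simp)
    show "c [^] f a = c"
      using pow_cong_p[OF c fa] c by simp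
  qed
qed

lemma exists_endomorphism_maps_to:
  assumes "a \<in> carrier C" "a \<noteq> \<one>" "c \<in> carrier C"
  shows "\<exists>\<phi>\<in>hom C C. \<phi> a = c"
proof -
  obtain f :: "'a \<Rightarrow> nat" where "(\<lambda>x. c [^] f x) \<in> hom C C" and "c [^] f a = c"
    using exists_rank_one_endomorphisms[OF assms(1,2)] assms(3) by metis
  then show ?thesis
    by (intro bexI[of _ "\<lambda>x. c [^] f x"])
qed

lemma central_endomorphism_is_pow:
  assumes \<psi>: "\<psi> \<in> hom C C"
    and central: "\<And>\<phi> x. \<phi> \<in> hom C C \<Longrightarrow> x \<in> carrier C \<Longrightarrow> \<psi> (\<phi> x) = \<phi> (\<psi> x)"
  shows "\<exists>m::nat. \<forall>c\<in>carrier C. \<psi> c = c [^] m"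
proof (cases "carrier C = {\<one>}")
  case True
  then show ?thesis
    using hom_one[OF \<psi> is_group is_group] by auto
next
  case False
  then obtain a where a: "a \<in> carrier C" "a \<noteq> \<one>"
    by blast
  obtain f :: "'a \<Rightarrow> nat" where hom: "\<And>c. c \<in> carrier C \<Longrightarrow> (\<lambda>x. c [^] f x) \<in> hom C C"
    and fa: "\<And>c. c \<in> carrier C \<Longrightarrow> c [^] f a = c"
    using exists_rank_one_endomorphisms[OF a] by blast
  \<comment> \<open>\<open>\<psi> c = \<psi> (\<phi> a) = \<phi> (\<psi> a)\<close> for the endomorphism \<open>\<phi> = (\<lambda>x. c [^] f x)\<close> with \<open>\<phi> a = c\<close>\<close>
  have "\<psi> c = c [^] f (\<psi> a)" if c: "c \<in> carrier C" for c
    using central[OF hom[OF c] a(1)] fa[OF c] by simp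
  then show ?thesis
    by blast
qed

end

section \<open>Direct powers of a group\<close>

lemma carrier_Pow_group: "carrier (Pow_group G t) = (\<Pi>\<^sub>E j\<in>{..<t}. carrier G)"
  by (simp add: Pow_group_def)

lemma mult_Pow_group: "x \<otimes>\<^bsub>Pow_group G t\<^esub> y = (\<lambda>j\<in>{..<t}. x j \<otimes>\<^bsub>G\<^esub> y j)"
  by (simp add: Pow_group_def)

lemma one_Pow_group: "\<one>\<^bsub>Pow_group G t\<^esub> = (\<lambda>j\<in>{..<t}. \<one>\<^bsub>G\<^esub>)"
  by (simp add: Pow_group_def)

lemma Pow_group_carrier_apply: "x \<in> carrier (Pow_group G t) \<Longrightarrow> j < t \<Longrightarrow> x j \<in> carrier G"
  by (auto simp: carrier_Pow_group)

lemma Pow_group_mult_apply: "j < t \<Longrightarrow> (x \<otimes>\<^bsub>Pow_group G t\<^esub> y) j = x j \<otimes>\<^bsub>G\<^esub> y j"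
  by (simp add: mult_Pow_group)

lemma (in group) group_Pow_group: "group (Pow_group G t)"
  by (simp add: Pow_group_def)

lemma (in group) inv_Pow_group:
  "x \<in> carrier (Pow_group G t) \<Longrightarrow> inv\<^bsub>Pow_group G t\<^esub> x = (\<lambda>j\<in>{..<t}. inv (x j))"
  by (simp add: Pow_group_def)

lemma (in group) Pow_group_inv_apply:
  "x \<in> carrier (Pow_group G t) \<Longrightarrow> j < t \<Longrightarrow> (inv\<^bsub>Pow_group G t\<^esub> x) j = inv (x j)"
  by (simp add: inv_Pow_group)

lemma (in comm_group) comm_group_Pow_group: "comm_group (Pow_group G t)"
proof (rule group.group_comm_groupI[OF group_Pow_group])
  fix x y assume "x \<in> carrier (Pow_group G t)" "y \<in> carrier (Pow_group G t)"
  then show "x \<otimes>\<^bsub>Pow_group G t\<^esub> y = y \<otimes>\<^bsub>Pow_group G t\<^esub> x"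
    by (auto simp: carrier_Pow_group mult_Pow_group PiE_iff m_comm intro: restrict_ext)
qed

lemma (in group) subgroup_coord_subprod: "subgroup (coord_subprod G t S) (Pow_group G t)"
proof -
  have "coord_subprod G t S = (\<Pi>\<^sub>E j\<in>{..<t}. if j \<in> S then carrier G else {\<one>})"
    by (rule Set.set_eqI) (force simp: coord_subprod_def carrier_Pow_group PiE_iff)
  moreover have "subgroup (\<Pi>\<^sub>E j\<in>{..<t}. if j \<in> S then carrier G else {\<one>}) (Pow_group G t)"
    unfolding Pow_group_def
  proof (subst PiE_subgroup_product_group)
    show "\<forall>j\<in>{..<t}. subgroup (if j \<in> S then carrier G else {\<one>}) G"
      using subgroup_self triv_subgroup by simp
  qed (rule is_group)
  ultimately show ?thesis
    by simp
qed

abbreviation trivial_on :: "('a, 'b) monoid_scheme \<Rightarrow> nat \<Rightarrow> nat set \<Rightarrow> (nat \<Rightarrow> 'a) set"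
  where "trivial_on G t J \<equiv> coord_subprod G t ({..<t} - J)"

lemma mem_trivial_on:
  "J \<subseteq> {..<t} \<Longrightarrow> x \<in> trivial_on G t J \<longleftrightarrow> x \<in> carrier (Pow_group G t) \<and> (\<forall>j\<in>J. x j = \<one>\<^bsub>G\<^esub>)"
  by (auto simp: coord_subprod_def)

abbreviation diag_invariant :: "('a, 'b) monoid_scheme \<Rightarrow> nat \<Rightarrow> (nat \<Rightarrow> 'a) set \<Rightarrow> bool"
  where "diag_invariant G t R \<equiv> \<forall>\<phi>\<in>hom G G. diag_map t \<phi> ` R \<subseteq> R"

lemma (in group) diag_map_hom:
  assumes "\<phi> \<in> hom G G"
  shows "diag_map t \<phi> \<in> hom (Pow_group G t) (Pow_group G t)"
  using assms
  by (intro homI) (auto simp: diag_map_def carrier_Pow_group mult_Pow_group PiE_iff hom_def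
      intro!: restrict_ext)

lemma (in group) diag_map_trivial_on:
  assumes "\<phi> \<in> hom G G"
  shows "diag_map t \<phi> ` coord_subprod G t S \<subseteq> coord_subprod G t S"
  using assms hom_one[OF assms is_group is_group] diag_map_hom[OF assms, of t]
  by (auto simp: coord_subprod_def diag_map_def hom_def)

lemma (in group) coord_embed_hom: "coord_embed G t i \<in> hom G (Pow_group G t)"
  by (intro homI) (auto simp: coord_embed_def carrier_Pow_group mult_Pow_group intro!: restrict_ext)

lemma (in group) diag_map_coord_embed:
  assumes "\<phi> \<in> hom G G"
  shows "diag_map t \<phi> (coord_embed G t i c) = coord_embed G t i (\<phi> c)"
  using hom_one[OF assms is_group is_group]
  by (auto simp: diag_map_def coord_embed_def intro!: restrict_ext)

lemma (in group) interpolation_of_span_trivial_on: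
  assumes R: "subgroup R (Pow_group G t)" and J: "J \<subseteq> {..<t}"
    and span: "R <#>\<^bsub>Pow_group G t\<^esub> trivial_on G t J = carrier (Pow_group G t)"
  shows "\<forall>y\<in>carrier (Pow_group G t). \<exists>x\<in>R. \<forall>j\<in>J. x j = y j"
proof
  fix y assume "y \<in> carrier (Pow_group G t)"
  then obtain r q where r: "r \<in> R" and q: "q \<in> trivial_on G t J" and y_eq: "y = r \<otimes>\<^bsub>Pow_group G t\<^esub> q"
    using span unfolding set_mult_def by blast
  have "r j = y j" if "j \<in> J" for j
  proof -
    have "j < t" "q j = \<one>"
      using that J q by (auto simp: mem_trivial_on)
    then show ?thesis
      using r subgroup.subset[OF R] Pow_group_carrier_apply[of r G t j] by (auto simp: y_eq Pow_group_mult_apply)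
  qed
  with r show "\<exists>x\<in>R. \<forall>j\<in>J. x j = y j"
    by blast
qed

lemma (in group) span_trivial_on_of_interpolation:
  assumes R: "subgroup R (Pow_group G t)" and J: "J \<subseteq> {..<t}"
    and interpolate: "\<forall>y\<in>carrier (Pow_group G t). \<exists>x\<in>R. \<forall>j\<in>J. x j = y j"
  shows "R <#>\<^bsub>Pow_group G t\<^esub> trivial_on G t J = carrier (Pow_group G t)"
proof
  interpret P: group "Pow_group G t"
    by (rule group_Pow_group)
  have RP: "R \<subseteq> carrier (Pow_group G t)"
    using R subgroup.subset by blast
  show "R <#>\<^bsub>Pow_group G t\<^esub> trivial_on G t J \<subseteq> carrier (Pow_group G t)"
    using RP subgroup.subset[OF subgroup_coord_subprod] by (rule P.setmult_subset_G)
  show "carrier (Pow_group G t) \<subseteq> R <#>\<^bsub>Pow_group G t\<^esub> trivial_on G t J"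
  proof
    fix y assume y: "y \<in> carrier (Pow_group G t)"
    then obtain x where x: "x \<in> R" "\<forall>j\<in>J. x j = y j"
      using interpolate by blast
    have xP: "x \<in> carrier (Pow_group G t)"
      using x(1) RP by blast
    have "(inv\<^bsub>Pow_group G t\<^esub> x \<otimes>\<^bsub>Pow_group G t\<^esub> y) j = \<one>" if "j \<in> J" for j
      using that J x(2) Pow_group_carrier_apply[OF y]
      by (auto simp: Pow_group_mult_apply Pow_group_inv_apply[OF xP])
    then have "inv\<^bsub>Pow_group G t\<^esub> x \<otimes>\<^bsub>Pow_group G t\<^esub> y \<in> trivial_on G t J"
      using J xP y by (simp add: mem_trivial_on)
    moreover have "y = x \<otimes>\<^bsub>Pow_group G t\<^esub> (inv\<^bsub>Pow_group G t\<^esub> x \<otimes>\<^bsub>Pow_group G t\<^esub> y)"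
      using xP y by (simp add: P.m_assoc[symmetric])
    ultimately show "y \<in> R <#>\<^bsub>Pow_group G t\<^esub> trivial_on G t J"
      using x(1) unfolding set_mult_def by blast
  qed
qed

section \<open>Projection along a complement\<close>

locale complementary_subgroups = comm_group G for G (structure) +
  fixes R Q
  assumes subgroup_R: "subgroup R G" and subgroup_Q: "subgroup Q G"
    and disjoint: "R \<inter> Q = {\<one>}" and span: "R <#> Q = carrier G"
begin

definition proj :: "'a \<Rightarrow> 'a"
  where "proj x = (THE q. q \<in> Q \<and> x \<otimes> inv q \<in> R)"

lemma R_carrier: "R \<subseteq> carrier G" and Q_carrier: "Q \<subseteq> carrier G"
  using subgroup_R subgroup_Q subgroup.subset by blast+

lemma ex1_proj:
  assumes x: "x \<in> carrier G"
  shows "\<exists>!q. q \<in> Q \<and> x \<otimes> inv q \<in> R"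
proof -
  obtain r q where rq: "r \<in> R" "q \<in> Q" "x = r \<otimes> q"
    using span x unfolding set_mult_def by blast
  moreover have "r \<in> carrier G" "q \<in> carrier G"
    using rq R_carrier Q_carrier by auto
  ultimately have "q \<in> Q \<and> x \<otimes> inv q \<in> R"
    by (simp add: m_assoc)
  moreover have "q' = q" if q': "q' \<in> Q" "x \<otimes> inv q' \<in> R" for q'
  proof -
    have "q' \<in> carrier G"
      using q'(1) Q_carrier by auto
    then have "(x \<otimes> inv q) \<otimes> inv (x \<otimes> inv q') = q' \<otimes> inv q"
      using x \<open>q \<in> carrier G\<close> by (simp add: inv_mult m_ac) (metis m_lcomm inv_closed r_inv r_one)
    moreover have "(x \<otimes> inv q) \<otimes> inv (x \<otimes> inv q') \<in> R"
      using \<open>q \<in> Q \<and> x \<otimes> inv q \<in> R\<close> q' subgroup_R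
      by (auto intro!: subgroup.m_closed subgroup.m_inv_closed)
    moreover have "q' \<otimes> inv q \<in> Q"
      using rq(2) q' subgroup_Q by (auto intro!: subgroup.m_closed subgroup.m_inv_closed)
    ultimately have "q' \<otimes> inv q = \<one>"
      using disjoint by auto
    then show "q' = q"
      using rq(2) q' Q_carrier by (metis inv_equality inv_inv subsetD inv_closed)
  qed
  ultimately show ?thesis
    by blast
qed

lemma proj_unique: "x \<in> carrier G \<Longrightarrow> q \<in> Q \<Longrightarrow> x \<otimes> inv q \<in> R \<Longrightarrow> proj x = q"
  unfolding proj_def using ex1_proj by blast

lemma proj_mem: "x \<in> carrier G \<Longrightarrow> proj x \<in> Q"
  and proj_residue: "x \<in> carrier G \<Longrightarrow> x \<otimes> inv (proj x) \<in> R"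
  unfolding proj_def using theI'[OF ex1_proj] by blast+

lemma proj_fixes: "q \<in> Q \<Longrightarrow> proj q = q"
  using Q_carrier subgroup.one_closed[OF subgroup_R] by (intro proj_unique) auto

lemma proj_hom: "proj \<in> hom G G"
proof (rule homI)
  show "proj x \<in> carrier G" if "x \<in> carrier G" for x
    using proj_mem[OF that] Q_carrier by blast
  fix x y assume x: "x \<in> carrier G" and y: "y \<in> carrier G"
  have "proj x \<in> carrier G" "proj y \<in> carrier G"
    using x y proj_mem Q_carrier by auto
  then have "(x \<otimes> y) \<otimes> inv (proj x \<otimes> proj y) = (x \<otimes> inv (proj x)) \<otimes> (y \<otimes> inv (proj y))"
    using x y by (simp add: inv_mult m_ac)
  then show "proj (x \<otimes> y) = proj x \<otimes> proj y"
    using x y proj_mem proj_residue subgroup_R subgroup_Q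
    by (intro proj_unique) (auto intro: subgroup.m_closed)
qed

lemma proj_image: "proj ` carrier G = Q"
proof
  show "Q \<subseteq> proj ` carrier G"
    using proj_fixes Q_carrier by (metis image_eqI subsetD subsetI)
qed (use proj_mem in blast)

lemma proj_eq_one_iff:
  assumes "x \<in> carrier G"
  shows "proj x = \<one> \<longleftrightarrow> x \<in> R"
proof
  show "proj x = \<one> \<Longrightarrow> x \<in> R"
    using proj_residue[OF assms] assms by simp
  show "x \<in> R \<Longrightarrow> proj x = \<one>"
    using assms subgroup.one_closed[OF subgroup_Q] by (intro proj_unique) auto
qed

lemma proj_commute:
  assumes \<sigma>: "\<sigma> \<in> hom G G" "\<sigma> ` R \<subseteq> R" "\<sigma> ` Q \<subseteq> Q" and x: "x \<in> carrier G"
  shows "proj (\<sigma> x) = \<sigma> (proj x)"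
proof (rule proj_unique)
  interpret \<sigma>: group_hom G G \<sigma>
    using \<sigma>(1) by unfold_locales
  have "proj x \<in> carrier G"
    using x proj_mem Q_carrier by auto
  then have "\<sigma> x \<otimes> inv (\<sigma> (proj x)) = \<sigma> (x \<otimes> inv (proj x))"
    using x by simp
  then show "\<sigma> x \<otimes> inv (\<sigma> (proj x)) \<in> R"
    using proj_residue[OF x] \<sigma>(2) by auto
  show "\<sigma> x \<in> carrier G" "\<sigma> (proj x) \<in> Q"
    using x proj_mem[OF x] \<sigma>(3) by auto
qed

end

section \<open>Complementary coordinate subgroups\<close>

context elementary_abelian
begin

lemma interpolation_insert:
  assumes R: "subgroup R (Pow_group C t)" "diag_invariant C t R" and J: "J \<subseteq> {..<t}"
    and interpolate: "\<forall>y\<in>carrier (Pow_group C t). \<exists>x\<in>R. \<forall>i\<in>J. x i = y i"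
    and r: "r \<in> R" "\<forall>i\<in>J. r i = \<one>" and j: "j < t" "r j \<noteq> \<one>"
  shows "\<forall>y\<in>carrier (Pow_group C t). \<exists>x\<in>R. \<forall>i\<in>insert j J. x i = y i"
proof
  fix y assume y: "y \<in> carrier (Pow_group C t)"
  then obtain x0 where x0: "x0 \<in> R" "\<forall>i\<in>J. x0 i = y i"
    using interpolate by blast
  have RP: "R \<subseteq> carrier (Pow_group C t)"
    using R(1) subgroup.subset by blast
  have x0j: "x0 j \<in> carrier C" and yj: "y j \<in> carrier C"
    using x0(1) RP y j(1) by (auto intro: Pow_group_carrier_apply)
  obtain \<phi> where \<phi>: "\<phi> \<in> hom C C" "\<phi> (r j) = inv (x0 j) \<otimes> y j"
    using exists_endomorphism_maps_to[of "r j" "inv (x0 j) \<otimes> y j"] r(1) RP j x0j yj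
    by (auto intro: Pow_group_carrier_apply)
  have "x0 \<otimes>\<^bsub>Pow_group C t\<^esub> diag_map t \<phi> r \<in> R"
    using R \<phi>(1) r(1) x0(1) by (blast intro: subgroup.m_closed)
  moreover have "(x0 \<otimes>\<^bsub>Pow_group C t\<^esub> diag_map t \<phi> r) i = y i" if "i \<in> insert j J" for i
  proof (cases "i = j")
    case True
    then show ?thesis
      using j(1) \<phi>(2) x0j yj by (simp add: Pow_group_mult_apply diag_map_def m_assoc[symmetric])
  next
    case False
    then have "i \<in> J" "i < t"
      using that J by auto
    then show ?thesis
      using x0 r(2) hom_one[OF \<phi>(1) is_group is_group] Pow_group_carrier_apply[OF y]
      by (simp add: Pow_group_mult_apply diag_map_def)
  qed
  ultimately show "\<exists>x\<in>R. \<forall>i\<in>insert j J. x i = y i"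
    by blast
qed

lemma exists_complementary_coords:
  assumes R: "subgroup R (Pow_group C t)" "diag_invariant C t R"
    and J: "J \<subseteq> {..<t}"
    and span: "R <#>\<^bsub>Pow_group C t\<^esub> trivial_on C t J = carrier (Pow_group C t)"
  obtains J' where "J \<subseteq> J'" "J' \<subseteq> {..<t}"
    "R \<inter> trivial_on C t J' = {\<one>\<^bsub>Pow_group C t\<^esub>}"
    "R <#>\<^bsub>Pow_group C t\<^esub> trivial_on C t J' = carrier (Pow_group C t)"
proof -
  define F where "F = {J'. J \<subseteq> J' \<and> J' \<subseteq> {..<t}
    \<and> (\<forall>y\<in>carrier (Pow_group C t). \<exists>x\<in>R. \<forall>i\<in>J'. x i = y i)}"
  have "finite F"
    by (rule finite_subset[of _ "Pow {..<t}"]) (auto simp: F_def)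
  moreover have "J \<in> F"
    using J interpolation_of_span_trivial_on[OF R(1) J span] by (simp add: F_def)
  ultimately obtain J' where "J' \<in> F" and maximal: "\<And>J''. J'' \<in> F \<Longrightarrow> J' \<subseteq> J'' \<Longrightarrow> J' = J''"
    using finite_has_maximal[of F] by blast
  then have J': "J \<subseteq> J'" "J' \<subseteq> {..<t}"
    and interpolate: "\<forall>y\<in>carrier (Pow_group C t). \<exists>x\<in>R. \<forall>i\<in>J'. x i = y i"
    by (auto simp: F_def)
  have "r = \<one>\<^bsub>Pow_group C t\<^esub>" if r: "r \<in> R" "r \<in> trivial_on C t J'" for r
  proof (rule ccontr)
    assume r_ne: "r \<noteq> \<one>\<^bsub>Pow_group C t\<^esub>"
    have rP: "r \<in> carrier (Pow_group C t)" and r_J': "\<forall>i\<in>J'. r i = \<one>"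
      using r(2) J'(2) by (simp_all add: mem_trivial_on)
    have "\<exists>j<t. r j \<noteq> \<one>"
    proof (rule ccontr)
      assume "\<not> (\<exists>j<t. r j \<noteq> \<one>)"
      then have "r = \<one>\<^bsub>Pow_group C t\<^esub>"
        using rP by (intro extensionalityI[of _ "{..<t}"]) (auto simp: one_Pow_group carrier_Pow_group PiE_iff)
      with r_ne show False ..
    qed
    then obtain j where j: "j < t" "r j \<noteq> \<one>"
      by blast
    then have "j \<notin> J'"
      using r_J' by blast
    moreover have "insert j J' \<in> F"
      using interpolation_insert[OF R J'(2) interpolate r(1) r_J' j] J' j(1) by (auto simp: F_def)
    ultimately show False
      using maximal by blast
  qed
  then have "R \<inter> trivial_on C t J' = {\<one>\<^bsub>Pow_group C t\<^esub>}"
    using subgroup.one_closed[OF R(1)] subgroup.one_closed[OF subgroup_coord_subprod] by blast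
  moreover have "R <#>\<^bsub>Pow_group C t\<^esub> trivial_on C t J' = carrier (Pow_group C t)"
    by (rule span_trivial_on_of_interpolation[OF R(1) J'(2) interpolate])
  ultimately show thesis
    using J' that by blast
qed

lemma diag_commuting_hom_coord_pow:
  assumes \<pi>: "\<pi> \<in> hom (Pow_group C t) (Pow_group C t)"
    and commute: "\<And>\<phi> x. \<phi> \<in> hom C C \<Longrightarrow> x \<in> carrier (Pow_group C t) \<Longrightarrow>
      \<pi> (diag_map t \<phi> x) = diag_map t \<phi> (\<pi> x)"
    and j: "j < t"
  shows "\<exists>m::nat. \<forall>c\<in>carrier C. \<pi> (coord_embed C t i c) j = c [^] m"
proof (rule central_endomorphism_is_pow)
  have embed: "coord_embed C t i c \<in> carrier (Pow_group C t)" if "c \<in> carrier C" for c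
    using coord_embed_hom that by (rule hom_in_carrier)
  show "(\<lambda>c. \<pi> (coord_embed C t i c) j) \<in> hom C C"
  proof (rule homI)
    fix c assume "c \<in> carrier C"
    then show "\<pi> (coord_embed C t i c) j \<in> carrier C"
      using Pow_group_carrier_apply[OF hom_in_carrier[OF \<pi> embed] j] by blast
  next
    fix c d assume "c \<in> carrier C" "d \<in> carrier C"
    then show "\<pi> (coord_embed C t i (c \<otimes> d)) j = \<pi> (coord_embed C t i c) j \<otimes> \<pi> (coord_embed C t i d) j"
      using j embed by (simp add: hom_mult[OF coord_embed_hom] hom_mult[OF \<pi>] Pow_group_mult_apply)
  qed
  show "\<pi> (coord_embed C t i (\<phi> c)) j = \<phi> (\<pi> (coord_embed C t i c) j)"
    if "\<phi> \<in> hom C C" "c \<in> carrier C" for \<phi> c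
  proof -
    have "\<pi> (coord_embed C t i (\<phi> c)) = \<pi> (diag_map t \<phi> (coord_embed C t i c))"
      by (simp add: diag_map_coord_embed[OF that(1)])
    also have "\<dots> = diag_map t \<phi> (\<pi> (coord_embed C t i c))"
      using commute[OF that(1) embed[OF that(2)]] .
    finally show ?thesis
      using j by (simp add: diag_map_def)
  qed
qed

lemma exists_projection_along:
  assumes R: "subgroup R (Pow_group C t)" "diag_invariant C t R"
    and J': "J' \<subseteq> {..<t}" and disjoint: "R \<inter> trivial_on C t J' = {\<one>\<^bsub>Pow_group C t\<^esub>}"
    and span: "R <#>\<^bsub>Pow_group C t\<^esub> trivial_on C t J' = carrier (Pow_group C t)"
  shows "\<exists>(n :: nat \<Rightarrow> nat \<Rightarrow> int) \<pi>.
    \<pi> \<in> hom (Pow_group C t) (Pow_group C t)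
    \<and> \<pi> ` carrier (Pow_group C t) = trivial_on C t J'
    \<and> (\<forall>x\<in>carrier (Pow_group C t). \<pi> x = \<one>\<^bsub>Pow_group C t\<^esub> \<longleftrightarrow> x \<in> R)
    \<and> (\<forall>q\<in>trivial_on C t J'. \<pi> q = q)
    \<and> (\<forall>i<t. \<forall>c\<in>carrier C.
         \<pi> (coord_embed C t i c) = (\<lambda>j\<in>{..<t}. if j \<notin> J' then c [^] (n i j) else \<one>))"
proof -
  interpret P: complementary_subgroups "Pow_group C t" R "trivial_on C t J'"
    using comm_group_Pow_group R(1) subgroup_coord_subprod disjoint span
    by (simp add: complementary_subgroups_def complementary_subgroups_axioms_def)
  have commute: "P.proj (diag_map t \<phi> x) = diag_map t \<phi> (P.proj x)"
    if "\<phi> \<in> hom C C" "x \<in> carrier (Pow_group C t)" for \<phi> x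
    using that R(2) by (intro P.proj_commute diag_map_hom diag_map_trivial_on) auto
  have embed: "coord_embed C t i c \<in> carrier (Pow_group C t)" if "c \<in> carrier C" for i c
    using coord_embed_hom that by (rule hom_in_carrier)
  have scalar: "\<exists>m::nat. \<forall>c\<in>carrier C. P.proj (coord_embed C t i c) j = c [^] m" if "j < t" for i j
    using P.proj_hom commute that by (rule diag_commuting_hom_coord_pow)
  define m where "m i j = (SOME m::nat. \<forall>c\<in>carrier C. P.proj (coord_embed C t i c) j = c [^] m)" for i j
  have m: "P.proj (coord_embed C t i c) j = c [^] m i j" if "j < t" "c \<in> carrier C" for i j c
    using someI_ex[OF scalar[OF that(1)]] that(2) unfolding m_def by blast
  have "P.proj (coord_embed C t i c) = (\<lambda>j\<in>{..<t}. if j \<notin> J' then c [^] int (m i j) else \<one>)"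
    if "c \<in> carrier C" for i c
  proof -
    have "P.proj (coord_embed C t i c) \<in> trivial_on C t J'"
      using P.proj_mem embed that by blast
    then have ext: "P.proj (coord_embed C t i c) \<in> extensional {..<t}"
      and one: "\<forall>j\<in>J'. P.proj (coord_embed C t i c) j = \<one>"
      using J' by (auto simp: mem_trivial_on carrier_Pow_group PiE_iff)
    show ?thesis
    proof (rule extensionalityI[OF ext])
      fix j assume "j \<in> {..<t}"
      then show "P.proj (coord_embed C t i c) j
          = (\<lambda>j\<in>{..<t}. if j \<notin> J' then c [^] int (m i j) else \<one>) j"
        using one m[of j c i] that by (auto simp: int_pow_int)
    qed simp
  qed
  then show ?thesis
    using P.proj_hom P.proj_image P.proj_eq_one_iff P.proj_fixes
    by (intro exI[of _ "\<lambda>i j. int (m i j)"] exI[of _ P.proj]) simp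
qed

end

section \<open>Products over small subsets\<close>

lemma hom_finprod:
  assumes G: "comm_group G" and H: "comm_group H" and \<phi>: "\<phi> \<in> hom G H"
    and c: "c \<in> A \<rightarrow> carrier G"
  shows "\<phi> (finprod G c A) = finprod H (\<lambda>a. \<phi> (c a)) A"
proof -
  interpret G: comm_group G by (rule G)
  interpret H: comm_group H by (rule H)
  show ?thesis
    using c
  proof (induction A rule: infinite_finite_induct)
    case (insert a A)
    then have "(\<lambda>a. \<phi> (c a)) \<in> insert a A \<rightarrow> carrier H"
      using \<phi> hom_in_carrier by fastforce
    then show ?case
      using insert \<phi> by (simp add: hom_mult Pi_iff)
  qed (use hom_one[OF \<phi> G.is_group H.is_group] in simp_all)
qed

lemma separating_subset:
  assumes J: "finite J" and a: "a \<in> J" "\<forall>b\<in>J. card (S b) \<le> card (S a)"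
    and S: "\<forall>j\<in>J. finite (S j) \<and> S j \<noteq> {}" "inj_on S J"
  obtains A where "A \<subseteq> S a" "A \<noteq> {}" "card A \<le> card J" "\<forall>b\<in>J - {a}. \<not> A \<subseteq> S b"
proof -
  have "\<exists>i. i \<in> S a - S b" if b: "b \<in> J - {a}" for b
  proof (rule ccontr)
    assume "\<nexists>i. i \<in> S a - S b"
    then have "S a \<subseteq> S b"
      by blast
    moreover have "card (S a) \<le> card (S b)"
      using card_mono \<open>S a \<subseteq> S b\<close> b S(1) by blast
    ultimately have "S a = S b"
      using a(2) b S(1) by (intro card_subset_eq) (auto intro: le_antisym)
    then show False
      using S(2) a(1) b by (auto dest: inj_onD)
  qed
  then obtain sep where sep: "\<And>b. b \<in> J - {a} \<Longrightarrow> sep b \<in> S a - S b"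
    by metis
  obtain i0 where "i0 \<in> S a"
    using S(1) a(1) by blast
  define A where "A = insert i0 (sep ` (J - {a}))"
  have "card A \<le> Suc (card (sep ` (J - {a})))"
    unfolding A_def using J by (simp add: card_insert_if)
  also have "\<dots> \<le> Suc (card (J - {a}))"
    using J by (simp add: card_image_le)
  also have "\<dots> = card J"
    using J a(1) by (rule card_Suc_Diff1)
  finally have "card A \<le> card J" .
  moreover have "A \<subseteq> S a" "\<forall>b\<in>J - {a}. \<not> A \<subseteq> S b"
    unfolding A_def using \<open>i0 \<in> S a\<close> sep by blast+
  ultimately show thesis
    using that A_def by blast
qed

definition small_subsets :: "nat \<Rightarrow> 'x set \<Rightarrow> 'x set set"
  where "small_subsets k S = {U. U \<subseteq> S \<and> U \<noteq> {} \<and> card U \<le> k}"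

lemma finite_small_subsets: "finite S \<Longrightarrow> finite (small_subsets k S)"
  by (rule finite_subset[of _ "Pow S"]) (auto simp: small_subsets_def)

definition subset_products ::
    "('a, 'b) monoid_scheme \<Rightarrow> nat \<Rightarrow> nat \<Rightarrow> (nat \<Rightarrow> 'x set) \<Rightarrow> ('x set \<Rightarrow> 'a) \<Rightarrow> nat \<Rightarrow> 'a"
  where "subset_products G t k S c = (\<lambda>j\<in>{..<t}. finprod G c (small_subsets k (S j)))"

definition subset_product_group ::
    "('a, 'b) monoid_scheme \<Rightarrow> nat \<Rightarrow> nat \<Rightarrow> (nat \<Rightarrow> 'x set) \<Rightarrow> (nat \<Rightarrow> 'a) set"
  where "subset_product_group G t k S = subset_products G t k S ` carrier (product_group UNIV (\<lambda>_. G))"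

context comm_group
begin

lemma subset_products_hom:
  "subset_products G t k S \<in> hom (product_group (UNIV :: 'x set set) (\<lambda>_. G)) (Pow_group G t)"
proof (rule homI)
  fix c :: "'x set \<Rightarrow> 'a" assume "c \<in> carrier (product_group UNIV (\<lambda>_. G))"
  then show "subset_products G t k S c \<in> carrier (Pow_group G t)"
    by (auto simp: subset_products_def carrier_Pow_group PiE_iff Pi_iff intro: finprod_closed)
next
  fix c d :: "'x set \<Rightarrow> 'a"
  assume "c \<in> carrier (product_group UNIV (\<lambda>_. G))" "d \<in> carrier (product_group UNIV (\<lambda>_. G))"
  then show "subset_products G t k S (c \<otimes>\<^bsub>product_group UNIV (\<lambda>_. G)\<^esub> d)
      = subset_products G t k S c \<otimes>\<^bsub>Pow_group G t\<^esub> subset_products G t k S d"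
    by (auto simp: subset_products_def mult_Pow_group PiE_iff Pi_iff restrict_UNIV intro!: restrict_ext)
qed

lemma subgroup_subset_product_group: "subgroup (subset_product_group G t k S) (Pow_group G t)"
  unfolding subset_product_group_def
  using subset_products_hom group_Pow_group is_group
  by (intro group_hom.img_is_subgroup) (simp add: group_hom_def group_hom_axioms_def)

lemma diag_invariant_subset_product_group: "diag_invariant G t (subset_product_group G t k S)"
proof (intro ballI image_subsetI)
  fix \<phi> x assume \<phi>: "\<phi> \<in> hom G G" and "x \<in> subset_product_group G t k S"
  then obtain c where c: "\<forall>U. c U \<in> carrier G" and x: "x = subset_products G t k S c"
    by (auto simp: subset_product_group_def PiE_iff)
  have "diag_map t \<phi> x = subset_products G t k S (\<lambda>U. \<phi> (c U))"
    using c \<phi> comm_group_axioms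
    by (auto simp: x diag_map_def subset_products_def hom_finprod intro!: restrict_ext)
  moreover have "(\<lambda>U. \<phi> (c U)) \<in> carrier (product_group UNIV (\<lambda>_. G))"
    using c by (auto intro: hom_in_carrier[OF \<phi>])
  ultimately show "diag_map t \<phi> x \<in> subset_product_group G t k S"
    by (simp add: subset_product_group_def)
qed

lemma subset_products_indicator:
  assumes "A \<noteq> {}" "card A \<le> k" "a \<in> carrier G" "j < t" "finite (S j)"
  shows "subset_products G t k S (\<lambda>U. if U = A then a else \<one>) j = (if A \<subseteq> S j then a else \<one>)"
proof (cases "A \<subseteq> S j")
  case True
  then have "A \<in> small_subsets k (S j)"
    using assms by (simp add: small_subsets_def)
  moreover have "finite (small_subsets k (S j))"
    using assms(5) by (simp add: finite_small_subsets)
  ultimately show ?thesis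
    using True assms(3,4) by (simp add: subset_products_def finprod_singleton_swap)
next
  case False
  then have "finprod G (\<lambda>U. if U = A then a else \<one>) (small_subsets k (S j)) = finprod G (\<lambda>U. \<one>) (small_subsets k (S j))"
    by (intro finprod_cong') (auto simp: small_subsets_def)
  then show ?thesis
    using False assms(4) by (simp add: subset_products_def)
qed

lemma subset_product_group_adjust_coord:
  assumes x0: "x0 \<in> subset_product_group G t k S" and A: "A \<noteq> {}" "card A \<le> k"
    and a: "a < t" "A \<subseteq> S a" "finite (S a)" and g: "g \<in> carrier G"
  shows "\<exists>x\<in>subset_product_group G t k S. x a = g
    \<and> (\<forall>j<t. finite (S j) \<and> \<not> A \<subseteq> S j \<longrightarrow> x j = x0 j)"
proof -
  have x0P: "x0 \<in> carrier (Pow_group G t)"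
    using x0 subgroup.subset[OF subgroup_subset_product_group] by blast
  define c where "c = inv (x0 a) \<otimes> g"
  have c: "c \<in> carrier G"
    unfolding c_def using Pow_group_carrier_apply[OF x0P a(1)] g by simp
  define m where "m = subset_products G t k S (\<lambda>U. if U = A then c else \<one>)"
  have m: "m j = (if A \<subseteq> S j then c else \<one>)" if "j < t" "finite (S j)" for j
    unfolding m_def using A c that by (intro subset_products_indicator) auto
  have "m \<in> subset_product_group G t k S"
    unfolding m_def subset_product_group_def using c by (intro imageI) auto
  then have "x0 \<otimes>\<^bsub>Pow_group G t\<^esub> m \<in> subset_product_group G t k S"
    by (rule subgroup.m_closed[OF subgroup_subset_product_group x0])
  moreover have "(x0 \<otimes>\<^bsub>Pow_group G t\<^esub> m) a = g"
    using m[OF a(1,3)] a(2) Pow_group_carrier_apply[OF x0P a(1)] g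
    by (simp add: Pow_group_mult_apply[OF a(1)] c_def m_assoc[symmetric])
  moreover have "(x0 \<otimes>\<^bsub>Pow_group G t\<^esub> m) j = x0 j" if "j < t" "finite (S j)" "\<not> A \<subseteq> S j" for j
    using m[OF that(1,2)] that(3) Pow_group_carrier_apply[OF x0P that(1)]
    by (simp add: Pow_group_mult_apply[OF that(1)])
  ultimately show ?thesis
    by blast
qed

lemma subset_products_interpolate:
  assumes S: "\<forall>j\<in>J. finite (S j) \<and> S j \<noteq> {}" "inj_on S J"
    and J: "J \<subseteq> {..<t}" "card J \<le> k" and y: "y \<in> carrier (Pow_group G t)"
  shows "\<exists>x\<in>subset_product_group G t k S. \<forall>j\<in>J. x j = y j"
  using S J
proof (induction "card J" arbitrary: J)
  case 0
  then have "J = {}"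
    using finite_subset by fastforce
  then show ?case
    using subgroup.one_closed[OF subgroup_subset_product_group] by blast
next
  case (Suc n)
  have "finite J" "J \<noteq> {}"
    using Suc.prems(3) Suc.hyps(2) finite_subset by fastforce+
  then have "Max ((\<lambda>b. card (S b)) ` J) \<in> (\<lambda>b. card (S b)) ` J"
    by (intro Max_in) auto
  then obtain a where "a \<in> J" "card (S a) = Max ((\<lambda>b. card (S b)) ` J)"
    by (metis imageE)
  then have a: "a \<in> J" "\<forall>b\<in>J. card (S b) \<le> card (S a)"
    using \<open>finite J\<close> by auto
  have "\<exists>x\<in>subset_product_group G t k S. \<forall>j\<in>J - {a}. x j = y j"
  proof (rule Suc.hyps(1))
    show "n = card (J - {a})"
      using Suc.hyps(2) \<open>finite J\<close> a(1) by simp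
    show "\<forall>j\<in>J - {a}. finite (S j) \<and> S j \<noteq> {}"
      using Suc.prems(1) by blast
    show "inj_on S (J - {a})"
      using Suc.prems(2) by (rule inj_on_subset) blast
    show "J - {a} \<subseteq> {..<t}" "card (J - {a}) \<le> k"
      using Suc.prems(3,4) card_Diff1_le[of J a] by auto
  qed
  then obtain x0 where x0: "x0 \<in> subset_product_group G t k S" "\<forall>j\<in>J - {a}. x0 j = y j"
    by blast
  obtain A where A: "A \<subseteq> S a" "A \<noteq> {}" "card A \<le> card J" "\<forall>b\<in>J - {a}. \<not> A \<subseteq> S b"
    using separating_subset[OF \<open>finite J\<close> a] Suc.prems(1,2) by blast
  have "a < t" "finite (S a)"
    using a(1) Suc.prems(1,3) by auto
  then obtain x where x: "x \<in> subset_product_group G t k S" "x a = y a"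
    "\<forall>j<t. finite (S j) \<and> \<not> A \<subseteq> S j \<longrightarrow> x j = x0 j"
    using subset_product_group_adjust_coord[OF x0(1) A(2) _ _ A(1) _ Pow_group_carrier_apply[OF y]]
      A(3) Suc.prems(4) by fastforce
  have "x j = y j" if "j \<in> J" for j
    using that x x0(2) A(4) Suc.prems(1,3) by (cases "j = a") auto
  with x(1) show ?case
    by blast
qed

end

section \<open>Ramsey's theorem for all levels at once\<close>

definition level_constant :: "nat \<Rightarrow> 'x set \<Rightarrow> ('x set \<Rightarrow> 'c) \<Rightarrow> bool"
  where "level_constant k H f \<longleftrightarrow>
    (\<forall>U V. U \<subseteq> H \<longrightarrow> V \<subseteq> H \<longrightarrow> card U = card V \<longrightarrow> 0 < card U \<longrightarrow> card U \<le> k \<longrightarrow> f U = f V)"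

lemma partn_lst_transfer:
  assumes P: "partn_lst {..<N} qs r" and A: "finite A" "card A = N"
  shows "partn_lst A qs r"
  unfolding partn_lst_def
proof (intro ballI)
  fix f assume f: "f \<in> (nsets A r) \<rightarrow> {..<length qs}"
  obtain h where h: "bij_betw h {..<N} A"
    using ex_bij_betw_nat_finite[OF A(1)] A(2) by (auto simp: atLeast0LessThan)
  then have hfun: "h \<in> {..<N} \<rightarrow> A" and hinj: "inj_on h {..<N}"
    by (auto simp: bij_betw_def)
  have "(\<lambda>Y. f (h ` Y)) \<in> (nsets ({..<N}) r) \<rightarrow> {..<length qs}"
    using nsets_compose_image_funcset[OF f hfun hinj] by (simp add: comp_def)
  then obtain i H where i: "i < length qs" and H: "H \<in> nsets ({..<N}) (qs ! i)"
    and mono: "(\<lambda>Y. f (h ` Y)) ` nsets H r \<subseteq> {i}"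
    using P unfolding partn_lst_def monochromatic_def by blast
  have HN: "H \<subseteq> {..<N}" and hinjH: "inj_on h H"
    using H inj_on_subset[OF hinj] by (auto simp: nsets_def)
  have "h ` H \<in> nsets A (qs ! i)"
    using H hfun hinjH HN by (auto simp: nsets_def card_image)
  moreover have "f ` nsets (h ` H) r \<subseteq> {i}"
  proof
    fix y assume "y \<in> f ` nsets (h ` H) r"
    then obtain Z where Z: "Z \<in> nsets (h ` H) r" and y: "y = f Z"
      by blast
    obtain Y where "Y \<in> nsets H r" "Z = h ` Y"
      by (rule nset_image_obtains[OF Z hinjH])
    then show "y \<in> {i}"
      using mono y by auto
  qed
  ultimately show "\<exists>i<length qs. monochromatic A (qs ! i) r f i"
    using i unfolding monochromatic_def by blast
qed

lemma level_constant_Suc: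
  assumes P: "partn_lst H0 (replicate q m) (Suc K)" and const: "level_constant K H0 f"
    and f: "\<forall>U. f U < q"
  obtains H where "H \<subseteq> H0" "card H = m" "level_constant (Suc K) H f"
proof -
  have "f \<in> (nsets H0 (Suc K)) \<rightarrow> {..<length (replicate q m)}"
    using f by auto
  then obtain i H where "i < q" and H: "H \<in> nsets H0 m" and mono: "f ` nsets H (Suc K) \<subseteq> {i}"
    using P unfolding partn_lst_def monochromatic_def by fastforce
  then have H': "H \<subseteq> H0" "card H = m" "finite H"
    by (auto simp: nsets_def)
  have "level_constant (Suc K) H f"
    unfolding level_constant_def
  proof (intro allI impI)
    fix U V assume UV: "U \<subseteq> H" "V \<subseteq> H" "card U = card V" "0 < card U" "card U \<le> Suc K"
    show "f U = f V"
    proof (cases "card U \<le> K")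
      case True
      then show ?thesis
        using const UV H'(1) unfolding level_constant_def by blast
    next
      case False
      then have "U \<in> nsets H (Suc K)" "V \<in> nsets H (Suc K)"
        using UV H'(3) finite_subset by (auto simp: nsets_def)
      then show ?thesis
        using mono by blast
    qed
  qed
  with H' that show thesis
    by blast
qed

lemma ramsey_level_constant:
  "\<exists>N. \<forall>f :: nat set \<Rightarrow> nat. (\<forall>U. f U < q) \<longrightarrow> (\<exists>H\<subseteq>{..<N}. card H = m \<and> level_constant K H f)"
proof (induction K arbitrary: m)
  case 0
  show ?case
    by (rule exI[of _ m]) (auto simp: level_constant_def)
next
  case (Suc K)
  obtain N1 :: nat where N1: "partn_lst {..<N1} (replicate q m) (Suc K)"
    using ramsey_full[of "replicate q m" "Suc K"] by blast
  obtain N where N: "\<forall>f :: nat set \<Rightarrow> nat. (\<forall>U. f U < q) \<longrightarrow> (\<exists>H\<subseteq>{..<N}. card H = N1 \<and> level_constant K H f)"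
    using Suc.IH by blast
  have "\<exists>H\<subseteq>{..<N}. card H = m \<and> level_constant (Suc K) H f" if f: "\<forall>U. f U < q" for f :: "nat set \<Rightarrow> nat"
  proof -
    obtain H0 where H0: "H0 \<subseteq> {..<N}" "card H0 = N1" and const: "level_constant K H0 f"
      using N f by blast
    have "partn_lst H0 (replicate q m) (Suc K)"
      using partn_lst_transfer[OF N1 finite_subset[OF H0(1)] H0(2)] by simp
    then obtain H where "H \<subseteq> H0" "card H = m" "level_constant (Suc K) H f"
      using const f by (rule level_constant_Suc)
    with H0(1) show ?thesis
      by blast
  qed
  then show ?case
    by blast
qed

section \<open>Vanishing of level-constant products\<close>

lemma prime_dvd_choose_prime_power:
  fixes p :: nat
  assumes p: "Factorial_Ring.prime p" and r: "0 < r" "r < p ^ e"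
  shows "p dvd (p ^ e choose r)"
proof (rule ccontr)
  assume "\<not> p dvd (p ^ e choose r)"
  then have "coprime (p ^ e) (p ^ e choose r)"
    using p by (simp add: prime_imp_coprime)
  moreover have "p ^ e dvd r * (p ^ e choose r)"
    using times_binomial_minus1_eq[OF r(1)] by simp
  ultimately have "p ^ e dvd r"
    by (simp add: coprime_dvd_mult_left_iff)
  then show False
    using r by (simp add: nat_dvd_not_less)
qed

lemma (in elementary_abelian) finprod_level_eq_one:
  assumes H: "finite H" "card H = p ^ k" and c: "\<forall>U. c U \<in> carrier C"
    and const: "level_constant k H c" and r: "0 < r" "r \<le> k"
  shows "finprod C c {U. U \<subseteq> H \<and> card U = r} = \<one>"
proof -
  have "r < p ^ k"
    using r(2) less_p_pow[of k] by linarith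
  then obtain U0 where U0: "U0 \<subseteq> H" "card U0 = r"
    using H(2) obtain_subset_with_card_n[of r H] by auto
  have "c U = c U0" if "U \<subseteq> H" "card U = r" for U
    using const[unfolded level_constant_def, rule_format, of U U0] that U0 r by simp
  then have "finprod C c {U. U \<subseteq> H \<and> card U = r} = finprod C (\<lambda>_. c U0) {U. U \<subseteq> H \<and> card U = r}"
    using c by (intro finprod_cong') auto
  also have "\<dots> = c U0 [^] (p ^ k choose r)"
    using c H n_subsets[OF H(1), of r] by (simp add: finprod_const)
  also have "p dvd (p ^ k choose r)"
    using r \<open>r < p ^ k\<close> by (intro prime_dvd_choose_prime_power[OF prime_p]) auto
  then have "c U0 [^] (p ^ k choose r) = c U0 [^] (0::nat)"
    using c by (intro pow_cong_p) (auto simp: cong_0_iff)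
  finally show ?thesis
    by simp
qed

lemma (in elementary_abelian) finprod_small_subsets_eq_one:
  assumes H: "finite H" "card H = p ^ k" and c: "\<forall>U. c U \<in> carrier C"
    and const: "level_constant k H c"
  shows "finprod C c (small_subsets k H) = \<one>"
proof -
  define L where "L r = {U. U \<subseteq> H \<and> card U = r}" for r
  have levels: "small_subsets k H = (\<Union>r\<in>{1..k}. L r)"
  proof (rule Set.set_eqI)
    fix U
    have "finite U" if "U \<subseteq> H"
      using H(1) that by (rule finite_subset[rotated])
    then show "U \<in> small_subsets k H \<longleftrightarrow> U \<in> (\<Union>r\<in>{1..k}. L r)"
      by (auto simp: small_subsets_def L_def Suc_le_eq card_gt_0_iff)
  qed
  have "finprod C c (\<Union>r\<in>{1..k}. L r) = finprod C (\<lambda>r. finprod C c (L r)) {1..k}"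
  proof (rule finprod_UN_disjoint)
    show "finite (L r)" for r
      using H(1) by (simp add: L_def)
    show "pairwise (\<lambda>r r'. disjnt (L r) (L r')) {1..k}"
      by (auto simp: L_def pairwise_def disjnt_def)
  qed (use c in auto)
  also have "\<dots> = finprod C (\<lambda>r. \<one>) {1..k}"
    using finprod_level_eq_one[OF H c const] by (intro finprod_cong') (auto simp: L_def)
  finally show ?thesis
    by (simp add: levels)
qed

section \<open>The construction\<close>

lemma exists_enumeration_nonempty_subsets:
  obtains t and \<sigma> :: "nat \<Rightarrow> nat set"
  where "bij_betw \<sigma> {..<t} {H. H \<subseteq> {..<N} \<and> H \<noteq> {}}" "N \<le> t"
proof -
  define T where "T = {H. H \<subseteq> {..<N} \<and> H \<noteq> {}}"
  have "finite T"
    by (rule finite_subset[of _ "Pow {..<N}"]) (auto simp: T_def)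
  then obtain \<sigma> where \<sigma>: "bij_betw \<sigma> {..<card T} T"
    unfolding atLeast0LessThan[symmetric] by (rule ex_bij_betw_nat_finite[THEN exE])
  have "inj_on (\<lambda>i. {i}) {..<N}" "(\<lambda>i. {i}) ` {..<N} \<subseteq> T"
    by (auto simp: T_def)
  from card_inj_on_le[OF this \<open>finite T\<close>] have "N \<le> card T"
    by simp
  with \<sigma> that show thesis
    unfolding T_def by blast
qed

context elementary_abelian
begin

lemma subset_product_group_has_trivial_coord:
  assumes ramsey: "\<forall>f :: nat set \<Rightarrow> nat. (\<forall>U. f U < card (carrier C)) \<longrightarrow>
      (\<exists>H\<subseteq>{..<N}. card H = p ^ k \<and> level_constant k H f)"
    and S: "{H. H \<subseteq> {..<N} \<and> H \<noteq> {}} \<subseteq> S ` {..<t}"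
    and x: "x \<in> subset_product_group C t k S"
  shows "\<exists>j<t. x j = \<one>"
proof -
  obtain c where c: "\<forall>U. c U \<in> carrier C" and x_eq: "x = subset_products C t k S c"
    using x by (auto simp: subset_product_group_def PiE_iff)
  obtain idx where idx: "bij_betw idx (carrier C) {0..<card (carrier C)}"
    using ex_bij_betw_finite_nat[OF finite_carrier] by blast
  have "idx (c U) \<in> {0..<card (carrier C)}" for U
    by (rule bij_betw_apply[OF idx]) (use c in simp)
  then have idx_less: "\<forall>U. idx (c U) < card (carrier C)"
    by simp
  obtain H where H: "H \<subseteq> {..<N}" "card H = p ^ k" and const: "level_constant k H (\<lambda>U. idx (c U))"
    using spec[OF ramsey, of "\<lambda>U. idx (c U)"] idx_less by blast
  have "level_constant k H c"
    unfolding level_constant_def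
  proof (intro allI impI)
    fix U V assume UV: "U \<subseteq> H" "V \<subseteq> H" "card U = card V" "0 < card U" "card U \<le> k"
    have "idx (c U) = idx (c V)"
      using const[unfolded level_constant_def, rule_format, OF UV] .
    then show "c U = c V"
      by (rule inj_onD[OF bij_betw_imp_inj_on[OF idx]]) (use c in simp_all)
  qed
  moreover have "finite H"
    using H(1) finite_subset by blast
  moreover have "H \<noteq> {}"
    using H(2) p_gt_1 by (metis card.empty not_one_less_zero power_eq_0_iff)
  then obtain j where j: "j < t" "S j = H"
    using S H(1) by blast
  ultimately have "x j = finprod C c (small_subsets k H)" "finprod C c (small_subsets k H) = \<one>"
    using finprod_small_subsets_eq_one[OF _ H(2) c] by (simp_all add: x_eq subset_products_def)
  with j show ?thesis
    by auto
qed

lemma exists_invariant_spanning_subgroup: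
  obtains t R where "t \<ge> k" "subgroup R (Pow_group C t)" "diag_invariant C t R"
    "\<forall>x\<in>R. \<exists>j<t. x j = \<one>"
    "\<forall>J. J \<subseteq> {..<t} \<and> card J = k \<longrightarrow>
      R <#>\<^bsub>Pow_group C t\<^esub> trivial_on C t J = carrier (Pow_group C t)"
proof -
  obtain N where ramsey: "\<forall>f :: nat set \<Rightarrow> nat. (\<forall>U. f U < card (carrier C)) \<longrightarrow>
      (\<exists>H\<subseteq>{..<N}. card H = p ^ k \<and> level_constant k H f)"
    using ramsey_level_constant[of "card (carrier C)" "p ^ k" k] by blast
  have "\<forall>U. (\<lambda>_. 0) U < card (carrier C)"
    using finite_carrier by (auto simp: card_gt_0_iff)
  then obtain H0 where "H0 \<subseteq> {..<N}" "card H0 = p ^ k"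
    using spec[OF ramsey, of "\<lambda>_. 0"] by blast
  then have "p ^ k \<le> N"
    using card_mono[of "{..<N}" H0] by simp
  obtain t \<sigma> where \<sigma>: "bij_betw \<sigma> {..<t} {H. H \<subseteq> {..<N} \<and> H \<noteq> {}}" and "N \<le> t"
    by (rule exists_enumeration_nonempty_subsets)
  then have "k \<le> t"
    using less_p_pow[of k] \<open>p ^ k \<le> N\<close> by linarith
  have \<sigma>_onto: "{H. H \<subseteq> {..<N} \<and> H \<noteq> {}} \<subseteq> \<sigma> ` {..<t}" and \<sigma>_inj: "inj_on \<sigma> {..<t}"
    using \<sigma> by (auto simp: bij_betw_def)
  have \<sigma>_sets: "finite (\<sigma> j) \<and> \<sigma> j \<noteq> {}" if "j < t" for j
  proof -
    have "\<sigma> j \<subseteq> {..<N}" "\<sigma> j \<noteq> {}"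
      using bij_betw_apply[OF \<sigma>] that by auto
    then show ?thesis
      using finite_subset[OF _ finite_lessThan] by blast
  qed
  define R where "R = subset_product_group C t k \<sigma>"
  have span: "R <#>\<^bsub>Pow_group C t\<^esub> trivial_on C t J = carrier (Pow_group C t)"
    if J: "J \<subseteq> {..<t}" "card J = k" for J
  proof -
    have "\<exists>x\<in>R. \<forall>j\<in>J. x j = y j" if "y \<in> carrier (Pow_group C t)" for y
      unfolding R_def using J \<sigma>_sets inj_on_subset[OF \<sigma>_inj J(1)] that
      by (intro subset_products_interpolate) auto
    then show ?thesis
      unfolding R_def using subgroup_subset_product_group J(1)
      by (intro span_trivial_on_of_interpolation) auto
  qed
  have trivial_coord: "\<exists>j<t. x j = \<one>" if "x \<in> R" for x
    using subset_product_group_has_trivial_coord[OF ramsey \<sigma>_onto that[unfolded R_def]] .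
  show thesis
  proof (rule that[of t R])
    show "subgroup R (Pow_group C t)" "diag_invariant C t R"
      unfolding R_def by (rule subgroup_subset_product_group diag_invariant_subset_product_group)+
  qed (use \<open>k \<le> t\<close> span trivial_coord in blast)+
qed

lemma exists_complement_projection:
  assumes R: "subgroup R (Pow_group C t)" "diag_invariant C t R" and J: "J \<subseteq> {..<t}"
    and span: "R <#>\<^bsub>Pow_group C t\<^esub> trivial_on C t J = carrier (Pow_group C t)"
  shows "\<exists>J'. J \<subseteq> J' \<and> J' \<subseteq> {..<t}
      \<and> R \<inter> trivial_on C t J' = {\<one>\<^bsub>Pow_group C t\<^esub>}
      \<and> R <#>\<^bsub>Pow_group C t\<^esub> trivial_on C t J' = carrier (Pow_group C t)
      \<and> (\<exists>(n :: nat \<Rightarrow> nat \<Rightarrow> int) \<pi>.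
           \<pi> \<in> hom (Pow_group C t) (Pow_group C t)
           \<and> \<pi> ` carrier (Pow_group C t) = trivial_on C t J'
           \<and> (\<forall>x\<in>carrier (Pow_group C t). \<pi> x = \<one>\<^bsub>Pow_group C t\<^esub> \<longleftrightarrow> x \<in> R)
           \<and> (\<forall>q\<in>trivial_on C t J'. \<pi> q = q)
           \<and> (\<forall>i<t. \<forall>c\<in>carrier C. \<pi> (coord_embed C t i c)
                = (\<lambda>j\<in>{..<t}. if j \<notin> J' then c [^] (n i j) else \<one>)))"
proof -
  obtain J' where J': "J \<subseteq> J'" "J' \<subseteq> {..<t}" "R \<inter> trivial_on C t J' = {\<one>\<^bsub>Pow_group C t\<^esub>}"
    "R <#>\<^bsub>Pow_group C t\<^esub> trivial_on C t J' = carrier (Pow_group C t)"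
    by (rule exists_complementary_coords[OF R J span])
  show ?thesis
    by (intro exI[of _ J'] conjI J' exists_projection_along[OF R J'(2-4)])
qed

end

theorem mainTheorem9:
  fixes C :: "('a, 'b) monoid_scheme" and p k :: nat
  assumes "Factorial_Ring.prime p" and "comm_group C" and "finite (carrier C)"
    and "\<forall>x\<in>carrier C. x [^]\<^bsub>C\<^esub> p = \<one>\<^bsub>C\<^esub>"
    and "k > 0"
  shows "\<exists>t\<ge>k. \<exists>R.
    subgroup R (Pow_group C t)
    \<and> (\<forall>\<phi>\<in>hom C C. diag_map t \<phi> ` R \<subseteq> R)
    \<and> (\<forall>x\<in>R. \<exists>j<t. x j = \<one>\<^bsub>C\<^esub>)
    \<and> (\<forall>J. J \<subseteq> {..<t} \<and> card J = k \<longrightarrow>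
          R <#>\<^bsub>Pow_group C t\<^esub> coord_subprod C t ({..<t} - J) = carrier (Pow_group C t))
    \<and> (\<forall>J. J \<subseteq> {..<t} \<and> card J = k \<longrightarrow>
          (\<exists>J'. J \<subseteq> J' \<and> J' \<subseteq> {..<t}
             \<and> R \<inter> coord_subprod C t ({..<t} - J') = {\<one>\<^bsub>Pow_group C t\<^esub>}
             \<and> R <#>\<^bsub>Pow_group C t\<^esub> coord_subprod C t ({..<t} - J') = carrier (Pow_group C t)
             \<and> (\<exists>(n :: nat \<Rightarrow> nat \<Rightarrow> int) \<pi>.
                  \<pi> \<in> hom (Pow_group C t) (Pow_group C t)
                  \<and> \<pi> ` carrier (Pow_group C t) = coord_subprod C t ({..<t} - J')
                  \<and> (\<forall>x\<in>carrier (Pow_group C t). \<pi> x = \<one>\<^bsub>Pow_group C t\<^esub> \<longleftrightarrow> x \<in> R)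
                  \<and> (\<forall>q\<in>coord_subprod C t ({..<t} - J'). \<pi> q = q)
                  \<and> (\<forall>i<t. \<forall>c\<in>carrier C.
                       \<pi> (coord_embed C t i c)
                       = (\<lambda>j\<in>{..<t}. if j \<notin> J' then c [^]\<^bsub>C\<^esub> (n i j) else \<one>\<^bsub>C\<^esub>)))))"
proof -
  interpret elementary_abelian C p
    using assms(1-4) by (simp add: elementary_abelian_def elementary_abelian_axioms_def)
  obtain t R where t: "t \<ge> k" and R: "subgroup R (Pow_group C t)" "diag_invariant C t R"
    and trivial_coord: "\<forall>x\<in>R. \<exists>j<t. x j = \<one>\<^bsub>C\<^esub>"
    and span: "\<forall>J. J \<subseteq> {..<t} \<and> card J = k \<longrightarrow>
      R <#>\<^bsub>Pow_group C t\<^esub> trivial_on C t J = carrier (Pow_group C t)"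
    by (rule exists_invariant_spanning_subgroup)
  show ?thesis
    by (intro exI[of _ t] exI[of _ R] conjI t R trivial_coord allI impI
        exists_complement_projection[OF R]) (use span in auto)
qed

end
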